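(* Every nonzero proper ideal $\mathcal I$ of $C_{an}(S^1;\mathbf{R})$ is of the form $\mathfrak m_{p_1}^{a_1}\mathfrak m_{p_2}^{a_2}\cdots\mathfrak m_{p_n}^{a_n}$ for some points $p_1,\dots,p_n\in S^1$ and positive integers $a_1,\dots,a_n$. Specifically, $p_1,\dots,p_n$ are the common zeros of the elements of $\mathcal I$ and $a_k$ is the minimum, over nonzero $f\in\mathcal I$, of the order of vanishing of $f$ at $p_k$.
   Context: $S^1$ is identified with $\mathbf{R}/2\pi\mathbf{Z}$. $C_{an}(S^1;\mathbf{R})$ is the ring (under pointwise operations) of real-valued real-analytic functions on $S^1$, i.e. $2\pi$-periodic real-analytic functions $\mathbf{R}\to\mathbf{R}$. For $p\in S^1$, $\mathfrak m_p=\{f\in C_{an}(S^1;\mathbf{R}): f(p)=0\}$. *)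

theory Defs
  imports "HOL-Analysis.Analysis" "HOL-Algebra.Ideal_Product"
begin

definition real_analytic_at :: "(real \<Rightarrow> real) \<Rightarrow> real \<Rightarrow> bool" where
  "real_analytic_at f x \<longleftrightarrow>
     (\<exists>r>0. \<exists>c::nat \<Rightarrow> real. \<forall>y. \<bar>y - x\<bar> < r \<longrightarrow> (\<lambda>n. c n * (y - x) ^ n) sums f y)"

text \<open>C_an(S^1;R): 2pi-periodic real-analytic functions R -> R.\<close>
definition Can :: "(real \<Rightarrow> real) set" where
  "Can = {f. (\<forall>x. f (x + 2 * pi) = f x) \<and> (\<forall>x. real_analytic_at f x)}"

definition Can_ring :: "(real \<Rightarrow> real) ring" where
  "Can_ring = \<lparr> carrier = Can, monoid.mult = (\<lambda>f g x. f x * g x), one = (\<lambda>x. 1),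
                zero = (\<lambda>x. 0), add = (\<lambda>f g x. f x + g x) \<rparr>"

text \<open>Points of S^1 = R/2piZ are represented by their representatives in [0, 2pi).\<close>
definition S1 :: "real set" where
  "S1 = {0..<2 * pi}"

definition max_ideal_at :: "real \<Rightarrow> (real \<Rightarrow> real) set" where
  "max_ideal_at p = {f \<in> Can. f p = 0}"

definition vanishing_order :: "(real \<Rightarrow> real) \<Rightarrow> real \<Rightarrow> nat" where
  "vanishing_order f p = (LEAST n. (deriv ^^ n) f p \<noteq> 0)"

end

theory Submission
  imports Defs "HOL-Complex_Analysis.Complex_Analysis"
begin

text \<open>
  Let \<open>J(Z, a)\<close> be the set of \<open>f \<in> C_an\<close> vanishing to order at least \<open>a p\<close> at every \<open>p \<in> Z\<close>.
  A nonzero ideal \<open>I\<close> equals \<open>J(Z, a)\<close> for its common zeros \<open>Z\<close> and minimal orders \<open>a\<close>: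
  finitely many \<open>g\<^sub>i \<in> I\<close> already have these common zeros and minimal orders on the compact
  circle, so \<open>v = \<Sum> g\<^sub>i\<^sup>2\<close> vanishes exactly on \<open>Z\<close>, to order \<open>2 a p\<close>. For \<open>f \<in> J(Z, a)\<close> the
  quotients \<open>f g\<^sub>i / v\<close> then extend analytically, and \<open>f = \<Sum> (f g\<^sub>i / v) g\<^sub>i \<in> I\<close> by the
  identity theorem.
  The product of the powers \<open>m\<^sub>p\<^bsup>a p\<^esup>\<close> lies in \<open>J(Z, a)\<close> and contains
  \<open>\<Prod> (sin (x - p) + c (1 - cos (x - p)))\<^bsup>a p\<^esup>\<close>, which for generic \<open>c\<close> vanishes on the circle
  exactly at \<open>Z\<close>, to exact order \<open>a p\<close>. So the product is a nonzero ideal with common zeros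
  \<open>Z\<close> and minimal orders \<open>a\<close>, and by the first part it equals \<open>J(Z, a) = I\<close>.
\<close>

lemma real_analytic_at_cong_nhds:
  assumes "real_analytic_at g p" "eventually (\<lambda>y. f y = g y) (nhds p)"
  shows "real_analytic_at f p"
proof -
  obtain r c where r: "r > 0" and s: "\<And>y. \<bar>y - p\<bar> < r \<Longrightarrow> (\<lambda>n. c n * (y - p) ^ n) sums g y"
    using assms(1) unfolding real_analytic_at_def by blast
  obtain d where d: "d > 0" "\<And>y. dist y p < d \<Longrightarrow> f y = g y"
    using assms(2) unfolding eventually_nhds_metric by blast
  have "\<forall>y. \<bar>y - p\<bar> < min r d \<longrightarrow> (\<lambda>n. c n * (y - p) ^ n) sums f y"
    using s d by (auto simp: dist_real_def)
  then show ?thesis unfolding real_analytic_at_def using r d(1) by (metis min_less_iff_conj)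
qed

lemma has_field_derivative_powser_at:
  fixes c :: "nat \<Rightarrow> 'a::{real_normed_field,banach}"
  assumes "\<And>w. norm w < r \<Longrightarrow> summable (\<lambda>n. c n * w ^ n)" and "norm (y - p) < r"
  shows "((\<lambda>y. \<Sum>n. c n * (y - p) ^ n) has_field_derivative (\<Sum>n. diffs c n * (y - p) ^ n)) (at y)"
proof -
  have "((\<lambda>z. \<Sum>n. c n * z ^ n) has_field_derivative (\<Sum>n. diffs c n * (y - p) ^ n)) (at (y - p))"
    by (rule termdiffs_strong'[OF assms])
  moreover have "((\<lambda>y. y - p) has_field_derivative 1) (at y)"
    by (auto intro!: derivative_eq_intros)
  ultimately show ?thesis using DERIV_chain2 by fastforce
qed

lemma powser_expansion_DERIV:
  fixes c :: "nat \<Rightarrow> real"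
  assumes r: "r > 0" and s: "\<And>y. \<bar>y - p\<bar> < r \<Longrightarrow> (\<lambda>n. c n * (y - p) ^ n) sums f y"
    and y: "\<bar>y - p\<bar> < r"
  shows "(f has_field_derivative (\<Sum>n. diffs c n * (y - p) ^ n)) (at y)"
    and "summable (\<lambda>n. diffs c n * (y - p) ^ n)"
proof -
  have sm: "summable (\<lambda>n. c n * w ^ n)" if "norm w < r" for w
    using s[of "p + w"] that by (auto simp: sums_iff)
  have "((\<lambda>y. \<Sum>n. c n * (y - p) ^ n) has_field_derivative (\<Sum>n. diffs c n * (y - p) ^ n)) (at y)"
    by (rule has_field_derivative_powser_at[OF sm]) (use y in auto)
  then show "(f has_field_derivative (\<Sum>n. diffs c n * (y - p) ^ n)) (at y)"
  proof (rule has_field_derivative_transform_within_open)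
    show "open (ball p r)" by simp
    show "y \<in> ball p r" unfolding mem_ball dist_real_def using y by arith
    fix x assume "x \<in> ball p r"
    then have "\<bar>x - p\<bar> < r" unfolding mem_ball dist_real_def by arith
    then show "(\<Sum>n. c n * (x - p) ^ n) = f x" using s sums_unique by metis
  qed
  show "summable (\<lambda>n. diffs c n * (y - p) ^ n)"
    by (rule termdiff_converges[of _ r]) (use y sm in auto)
qed

lemma diffs_funpow_mult_fact: "(diffs ^^ n) c k * fact k = fact (k + n) * (c (k + n) :: real)"
proof (induction n arbitrary: k)
  case 0 then show ?case by simp
next
  case (Suc n)
  have "(diffs ^^ Suc n) c k * fact k = (diffs ^^ n) c (Suc k) * (of_nat (Suc k) * fact k)"
    by (simp add: diffs_def)
  also have "\<dots> = (diffs ^^ n) c (Suc k) * fact (Suc k)" by simp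
  finally show ?case using Suc.IH[of "Suc k"] by simp
qed

lemma higher_deriv_powser_expansion_sums:
  fixes f :: "real \<Rightarrow> real"
  assumes r: "r > 0" and s: "\<And>y. \<bar>y - p\<bar> < r \<Longrightarrow> (\<lambda>n. c n * (y - p) ^ n) sums f y"
  shows "\<bar>y - p\<bar> < r \<Longrightarrow> (\<lambda>k. (diffs ^^ n) c k * (y - p) ^ k) sums (deriv ^^ n) f y"
proof (induction n arbitrary: y)
  case 0 then show ?case using s by simp
next
  case (Suc n)
  note D = powser_expansion_DERIV[OF r Suc.IH Suc.prems]
  have "deriv ((deriv ^^ n) f) y = (\<Sum>k. diffs ((diffs ^^ n) c) k * (y - p) ^ k)"
    using D(1) by (rule DERIV_imp_deriv)
  then show ?case using summable_sums[OF D(2)] by simp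
qed

lemma higher_deriv_powser_expansion:
  fixes f :: "real \<Rightarrow> real"
  assumes "r > 0" and "\<And>y. \<bar>y - p\<bar> < r \<Longrightarrow> (\<lambda>n. c n * (y - p) ^ n) sums f y"
  shows "(deriv ^^ n) f p = fact n * c n"
proof -
  have "(deriv ^^ n) f p = (diffs ^^ n) c 0"
    using higher_deriv_powser_expansion_sums[OF assms, where y = p and n = n] \<open>r > 0\<close>
    by (simp add: sums_iff)
  also have "\<dots> = fact n * c n" using diffs_funpow_mult_fact[of n c 0] by simp
  finally show ?thesis .
qed

lemma real_analytic_at_imp_isCont:
  assumes "real_analytic_at f p"
  shows "isCont f p"
proof -
  obtain r c where r: "r > 0" and s: "\<And>y. \<bar>y - p\<bar> < r \<Longrightarrow> (\<lambda>n. c n * (y - p) ^ n) sums f y"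
    using assms unfolding real_analytic_at_def by blast
  show ?thesis using DERIV_isCont[OF powser_expansion_DERIV(1)[OF r s, of p]] r by simp
qed

text \<open>
  Closure properties of real-analytic functions are inherited from holomorphic functions: a real
  power series converging on \<open>(p - r, p + r)\<close> converges on the complex disc of radius \<open>r\<close>, and
  the real parts of the Taylor coefficients of a holomorphic function on that disc give back a real
  expansion.
\<close>

lemma real_analytic_at_holomorphic_extension:
  assumes "real_analytic_at f p"
  obtains r G where "r > 0" "G holomorphic_on ball (complex_of_real p) r"
    "\<And>y. \<bar>y - p\<bar> < r \<Longrightarrow> G (of_real y) = of_real (f y)"
proof -
  obtain r c where r: "r > 0" and s: "\<And>y. \<bar>y - p\<bar> < r \<Longrightarrow> (\<lambda>n. c n * (y - p) ^ n) sums f y"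
    using assms unfolding real_analytic_at_def by blast
  define C where "C n = complex_of_real (c n)" for n
  define G where "G z = (\<Sum>n. C n * (z - of_real p) ^ n)" for z
  have summ: "summable (\<lambda>n. C n * w ^ n)" if "norm w < r" for w
  proof -
    define t where "t = (norm w + r) / 2"
    have t: "norm w < t" "t < r" using that by (auto simp: t_def)
    have "0 \<le> t" unfolding t_def using that norm_ge_zero[of w] by argo
    have "summable (\<lambda>n. c n * t ^ n)" using s[of "p + t"] t \<open>0 \<le> t\<close> by (simp add: sums_iff)
    then have "summable (\<lambda>n. complex_of_real (c n * t ^ n))" by (subst summable_complex_of_real)
    then have "summable (\<lambda>n. C n * (of_real t) ^ n)" by (simp add: C_def)
    then have "summable (\<lambda>n. norm (C n * w ^ n))" by (rule powser_insidea) (use t in auto)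
    then show ?thesis by (rule summable_norm_cancel)
  qed
  have "G holomorphic_on ball (complex_of_real p) r"
  proof (subst holomorphic_on_open, simp, intro ballI exI)
    fix z assume "z \<in> ball (complex_of_real p) r"
    then have "norm (z - of_real p) < r" by (simp add: dist_norm norm_minus_commute)
    from has_field_derivative_powser_at[of r C z "of_real p", OF summ this]
    show "(G has_field_derivative (\<Sum>n. diffs C n * (z - of_real p) ^ n)) (at z)"
      by (simp add: G_def[abs_def])
  qed
  moreover have "G (of_real y) = of_real (f y)" if "\<bar>y - p\<bar> < r" for y
  proof -
    have "(\<lambda>n. complex_of_real (c n * (y - p) ^ n)) sums of_real (f y)"
      by (rule sums_of_real[OF s[OF that]])
    then show ?thesis by (simp add: G_def C_def sums_iff)
  qed
  ultimately show ?thesis by (rule that[OF r])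
qed

lemma real_analytic_at_of_holomorphic:
  assumes "r > 0" "G holomorphic_on ball (complex_of_real p) r"
    "\<And>y. \<bar>y - p\<bar> < r \<Longrightarrow> Re (G (of_real y)) = f y"
  shows "real_analytic_at f p"
proof -
  define a where "a n = (deriv ^^ n) G (of_real p) / fact n" for n
  have S: "(\<lambda>n. Re (a n) * (y - p) ^ n) sums f y" if "\<bar>y - p\<bar> < r" for y
  proof -
    have "of_real y \<in> ball (complex_of_real p) r" using that by (simp add: dist_real_def)
    from holomorphic_power_series[OF assms(2) this]
    have "(\<lambda>n. a n * (of_real y - of_real p) ^ n) sums G (of_real y)" by (simp add: a_def)
    from sums_Re[OF this]
    have "(\<lambda>n. Re (a n * (of_real y - of_real p) ^ n)) sums Re (G (of_real y))" .
    moreover have "Re (a n * (of_real y - of_real p) ^ n) = Re (a n) * (y - p) ^ n" for n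
    proof -
      have "(complex_of_real y - of_real p) ^ n = of_real ((y - p) ^ n)" by simp
      then show ?thesis by simp
    qed
    ultimately show ?thesis using assms(3) that by simp
  qed
  show ?thesis unfolding real_analytic_at_def
    by (intro exI[of _ r] conjI exI[of _ "\<lambda>n. Re (a n)"] allI impI assms(1) S)
qed

lemma real_analytic_at_add:
  assumes f: "real_analytic_at f p" and g: "real_analytic_at g p"
  shows "real_analytic_at (\<lambda>x. f x + g x) p"
proof -
  obtain r1 G1 where r1: "r1 > 0" and h1: "G1 holomorphic_on ball (complex_of_real p) r1"
    and e1: "\<And>y. \<bar>y - p\<bar> < r1 \<Longrightarrow> G1 (of_real y) = of_real (f y)"
    using real_analytic_at_holomorphic_extension[OF f] by blast
  obtain r2 G2 where r2: "r2 > 0" and h2: "G2 holomorphic_on ball (complex_of_real p) r2"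
    and e2: "\<And>y. \<bar>y - p\<bar> < r2 \<Longrightarrow> G2 (of_real y) = of_real (g y)"
    using real_analytic_at_holomorphic_extension[OF g] by blast
  show ?thesis
  proof (rule real_analytic_at_of_holomorphic[of "min r1 r2" "\<lambda>z. G1 z + G2 z"])
    show "(\<lambda>z. G1 z + G2 z) holomorphic_on ball (complex_of_real p) (min r1 r2)"
      by (intro holomorphic_intros holomorphic_on_subset[OF h1] holomorphic_on_subset[OF h2]) auto
  qed (use r1 r2 e1 e2 in auto)
qed

lemma real_analytic_at_mult:
  assumes f: "real_analytic_at f p" and g: "real_analytic_at g p"
  shows "real_analytic_at (\<lambda>x. f x * g x) p"
proof -
  obtain r1 G1 where r1: "r1 > 0" and h1: "G1 holomorphic_on ball (complex_of_real p) r1"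
    and e1: "\<And>y. \<bar>y - p\<bar> < r1 \<Longrightarrow> G1 (of_real y) = of_real (f y)"
    using real_analytic_at_holomorphic_extension[OF f] by blast
  obtain r2 G2 where r2: "r2 > 0" and h2: "G2 holomorphic_on ball (complex_of_real p) r2"
    and e2: "\<And>y. \<bar>y - p\<bar> < r2 \<Longrightarrow> G2 (of_real y) = of_real (g y)"
    using real_analytic_at_holomorphic_extension[OF g] by blast
  show ?thesis
  proof (rule real_analytic_at_of_holomorphic[of "min r1 r2" "\<lambda>z. G1 z * G2 z"])
    show "(\<lambda>z. G1 z * G2 z) holomorphic_on ball (complex_of_real p) (min r1 r2)"
      by (intro holomorphic_intros holomorphic_on_subset[OF h1] holomorphic_on_subset[OF h2]) auto
  qed (use r1 r2 e1 e2 in auto)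
qed

lemma real_analytic_at_inverse:
  assumes g: "real_analytic_at g p" and "g p \<noteq> 0"
  shows "real_analytic_at (\<lambda>x. inverse (g x)) p"
proof -
  obtain r1 G1 where r1: "r1 > 0" and h1: "G1 holomorphic_on ball (complex_of_real p) r1"
    and e1: "\<And>y. \<bar>y - p\<bar> < r1 \<Longrightarrow> G1 (of_real y) = of_real (g y)"
    using real_analytic_at_holomorphic_extension[OF g] by blast
  have "isCont G1 (of_real p)"
    using holomorphic_on_imp_continuous_on[OF h1] r1 by (simp add: continuous_on_interior)
  moreover have "G1 (of_real p) \<noteq> 0" using e1[of p] r1 \<open>g p \<noteq> 0\<close> by simp
  ultimately obtain e where e: "e > 0" "\<And>z. dist (of_real p) z < e \<Longrightarrow> G1 z \<noteq> 0"
    using continuous_at_avoid by blast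
  show ?thesis
  proof (rule real_analytic_at_of_holomorphic[of "min r1 e" "\<lambda>z. inverse (G1 z)"])
    show "(\<lambda>z. inverse (G1 z)) holomorphic_on ball (complex_of_real p) (min r1 e)"
      by (intro holomorphic_intros holomorphic_on_subset[OF h1]) (auto intro!: e(2))
  qed (use r1 e e1 in \<open>auto simp flip: of_real_inverse\<close>)
qed

lemma real_analytic_at_const: "real_analytic_at (\<lambda>x. k) p"
  by (rule real_analytic_at_of_holomorphic[of 1 "\<lambda>z. of_real k"]) auto

lemma real_analytic_at_ident: "real_analytic_at (\<lambda>x. x) p"
  by (rule real_analytic_at_of_holomorphic[of 1 "\<lambda>z. z"]) auto

lemma real_analytic_at_sin_diff: "real_analytic_at (\<lambda>x. sin (x - q)) p"
proof (rule real_analytic_at_of_holomorphic[of 1 "\<lambda>z. sin (z - of_real q)"])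
  fix y
  have "sin (complex_of_real y - of_real q) = of_real (sin (y - q))"
    by (metis of_real_diff sin_of_real)
  then show "Re (sin (complex_of_real y - of_real q)) = sin (y - q)" by simp
qed (auto intro!: holomorphic_intros)

lemma real_analytic_at_cos_diff: "real_analytic_at (\<lambda>x. cos (x - q)) p"
proof (rule real_analytic_at_of_holomorphic[of 1 "\<lambda>z. cos (z - of_real q)"])
  fix y
  have "cos (complex_of_real y - of_real q) = of_real (cos (y - q))"
    by (metis of_real_diff cos_of_real)
  then show "Re (cos (complex_of_real y - of_real q)) = cos (y - q)" by simp
qed (auto intro!: holomorphic_intros)

lemma real_analytic_at_minus: "real_analytic_at f p \<Longrightarrow> real_analytic_at (\<lambda>x. - f x) p"
  using real_analytic_at_mult[OF real_analytic_at_const[of "-1"]] by simp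

lemma real_analytic_at_diff:
  "real_analytic_at f p \<Longrightarrow> real_analytic_at g p \<Longrightarrow> real_analytic_at (\<lambda>x. f x - g x) p"
  using real_analytic_at_add[OF _ real_analytic_at_minus] by simp

lemma real_analytic_at_divide:
  "real_analytic_at f p \<Longrightarrow> real_analytic_at g p \<Longrightarrow> g p \<noteq> 0 \<Longrightarrow>
   real_analytic_at (\<lambda>x. f x / g x) p"
  using real_analytic_at_mult[OF _ real_analytic_at_inverse] by (simp add: divide_inverse)

lemma real_analytic_at_sum:
  "finite A \<Longrightarrow> (\<And>i. i \<in> A \<Longrightarrow> real_analytic_at (F i) p) \<Longrightarrow>
   real_analytic_at (\<lambda>x. \<Sum>i\<in>A. F i x) p"
  by (induction A rule: finite_induct) (auto intro: real_analytic_at_const real_analytic_at_add)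

lemma real_analytic_at_prod:
  "finite A \<Longrightarrow> (\<And>i. i \<in> A \<Longrightarrow> real_analytic_at (F i) p) \<Longrightarrow>
   real_analytic_at (\<lambda>x. \<Prod>i\<in>A. F i x) p"
  by (induction A rule: finite_induct) (auto intro: real_analytic_at_const real_analytic_at_mult)

lemma real_analytic_at_power: "real_analytic_at f p \<Longrightarrow> real_analytic_at (\<lambda>x. f x ^ n) p"
  by (induction n) (auto intro: real_analytic_at_const real_analytic_at_mult)

lemma islimpt_if_eventually_nhds:
  fixes x :: "'a::perfect_space"
  assumes "eventually P (nhds x)"
  shows "x islimpt {y. P y}"
  unfolding islimpt_iff_eventually
proof
  assume "eventually (\<lambda>y. y \<notin> {y. P y}) (at x)"
  moreover have "eventually P (at x)" using assms by (simp add: eventually_at_filter eventually_mono)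
  ultimately have "eventually (\<lambda>y. False) (at x)" by eventually_elim simp
  then show False by simp
qed

lemma real_analytic_at_eventually_zero_if_islimpt:
  assumes "real_analytic_at f x" and "x islimpt {y. f y = 0}"
  shows "eventually (\<lambda>y. f y = 0) (nhds x)"
proof -
  obtain r G where r: "r > 0" and hol: "G holomorphic_on ball (complex_of_real x) r"
    and eq: "\<And>y. \<bar>y - x\<bar> < r \<Longrightarrow> G (of_real y) = of_real (f y)"
    using real_analytic_at_holomorphic_extension[OF assms(1)] by blast
  define U where "U = complex_of_real ` {y. \<bar>y - x\<bar> < r \<and> f y = 0}"
  have U: "U \<subseteq> ball (of_real x) r" unfolding U_def by (auto simp: dist_real_def abs_minus_commute)
  have "of_real x islimpt U"
    unfolding islimpt_approachable
  proof (intro allI impI)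
    fix e :: real assume "e > 0"
    then have "min e r > 0" using r by simp
    then obtain y where y: "y \<in> {y. f y = 0}" "y \<noteq> x" "dist y x < min e r"
      using assms(2) unfolding islimpt_approachable by blast
    then have "complex_of_real y \<in> U" unfolding U_def by (auto simp: dist_real_def)
    moreover have "complex_of_real y \<noteq> of_real x" "dist (complex_of_real y) (of_real x) < e"
      using y(2,3) by simp_all
    ultimately show "\<exists>u\<in>U. u \<noteq> of_real x \<and> dist u (of_real x) < e" by blast
  qed
  have G0: "G w = 0" if "w \<in> ball (of_real x) r" for w
  proof (rule analytic_continuation[OF hol open_ball connected_ball U _ \<open>of_real x islimpt U\<close> _ that])
    show "complex_of_real x \<in> ball (complex_of_real x) r" using r by simp
    fix z assume "z \<in> U"
    then obtain y where "z = of_real y" "\<bar>y - x\<bar> < r" "f y = 0" unfolding U_def by blast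
    then show "G z = 0" using eq by simp
  qed
  have "f y = 0" if "dist y x < r" for y
  proof -
    have y: "\<bar>y - x\<bar> < r" using that by (simp add: dist_real_def)
    then have "of_real (f y) = G (of_real y)" using eq by simp
    also have "\<dots> = 0" using G0 y by (simp add: dist_real_def abs_minus_commute)
    finally show ?thesis by simp
  qed
  then show ?thesis unfolding eventually_nhds_metric using r by blast
qed

lemma real_analytic_eq_zero_if_islimpt:
  assumes analytic: "\<And>x. real_analytic_at f x" and "x0 islimpt {y. f y = 0}"
  shows "f = (\<lambda>x. 0)"
proof -
  define S where "S = {x. eventually (\<lambda>y. f y = 0) (nhds x)}"
  have SZ: "S \<subseteq> {y. f y = 0}" unfolding S_def using eventually_nhds_x_imp_x by blast
  have "open S"
    unfolding S_def eventually_nhds by (subst open_subopen) blast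
  moreover have "closed S"
    unfolding closed_limpt
  proof (intro allI impI)
    fix x assume "x islimpt S"
    then have "x islimpt {y. f y = 0}" using SZ islimpt_subset by blast
    then show "x \<in> S"
      unfolding S_def using real_analytic_at_eventually_zero_if_islimpt[OF analytic] by blast
  qed
  moreover have "x0 \<in> S"
    unfolding S_def using real_analytic_at_eventually_zero_if_islimpt[OF analytic assms(2)] by blast
  ultimately have "S = UNIV" using clopen[of S] by blast
  then show ?thesis using SZ by auto
qed

lemma real_analytic_eq_zero_if_eventually_zero:
  assumes "\<And>x. real_analytic_at f x" and "eventually (\<lambda>y. f y = 0) (nhds x0)"
  shows "f = (\<lambda>x. 0)"
  using real_analytic_eq_zero_if_islimpt[OF assms(1) islimpt_if_eventually_nhds[OF assms(2)]] .

lemma finite_zeros_in_S1: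
  assumes "\<And>x. real_analytic_at f x" and "f \<noteq> (\<lambda>x. 0)"
  shows "finite {x \<in> S1. f x = 0}"
proof (rule ccontr)
  assume inf: "infinite {x \<in> S1. f x = 0}"
  have "bounded {x \<in> S1. f x = 0}"
    by (rule bounded_subset[OF bounded_closed_interval[of 0 "2 * pi"]]) (auto simp: S1_def)
  then obtain x where "x islimpt {x \<in> S1. f x = 0}"
    using bounded_infinite_imp_islimpt[OF order_refl _ inf] by blast
  then have "x islimpt {y. f y = 0}" by (rule islimpt_subset) blast
  then show False using real_analytic_eq_zero_if_islimpt[OF assms(1)] assms(2) by blast
qed

lemma real_analytic_higher_deriv_nonzero:
  assumes analytic: "\<And>x. real_analytic_at f x" and "f \<noteq> (\<lambda>x. 0)"
  shows "\<exists>n. (deriv ^^ n) f p \<noteq> 0"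
proof (rule ccontr)
  assume D: "\<not> ?thesis"
  obtain r c where r: "r > 0" and s: "\<And>y. \<bar>y - p\<bar> < r \<Longrightarrow> (\<lambda>n. c n * (y - p) ^ n) sums f y"
    using analytic[of p] unfolding real_analytic_at_def by blast
  have "c n = 0" for n using higher_deriv_powser_expansion[OF r s, of n] D by simp
  then have "f y = 0" if "dist y p < r" for y
    using s[of y] that by (simp add: sums_iff dist_real_def)
  then have "eventually (\<lambda>y. f y = 0) (nhds p)" unfolding eventually_nhds_metric using r by blast
  then show False using real_analytic_eq_zero_if_eventually_zero[OF analytic] assms(2) by blast
qed

lemma real_analytic_at_factor_power:
  assumes "real_analytic_at f p" and "\<And>j. j < m \<Longrightarrow> (deriv ^^ j) f p = 0"
  obtains F where "real_analytic_at F p" "F p = (deriv ^^ m) f p / fact m"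
    "eventually (\<lambda>y. f y = (y - p) ^ m * F y) (nhds p)"
proof -
  obtain r c where r: "r > 0" and s: "\<And>y. \<bar>y - p\<bar> < r \<Longrightarrow> (\<lambda>n. c n * (y - p) ^ n) sums f y"
    using assms(1) unfolding real_analytic_at_def by blast
  have c0: "c j = 0" if "j < m" for j
    using higher_deriv_powser_expansion[OF r s, of j] assms(2)[OF that] by simp
  define F where "F y = (\<Sum>k. c (k + m) * (y - p) ^ k)" for y
  have SF: "(\<lambda>k. c (k + m) * (y - p) ^ k) sums F y \<and> f y = (y - p) ^ m * F y"
    if y: "\<bar>y - p\<bar> < r" for y
  proof (cases "y = p")
    case True
    have "(\<lambda>k. c (k + m) * (y - p) ^ k) sums c m"
      using True powser_sums_zero[of "\<lambda>k. c (k + m)"] by simp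
    moreover have "f p = c 0" using s[of p] r by (simp add: sums_iff)
    then have "f y = (y - p) ^ m * c m" using True c0[of 0] by (cases m) simp_all
    ultimately show ?thesis by (simp add: F_def sums_iff)
  next
    case False
    have "(\<lambda>k. c (k + m) * (y - p) ^ (k + m)) sums f y"
      using sums_iff_shift[of "\<lambda>n. c n * (y - p) ^ n" m "f y"] s[OF y] c0 by simp
    from sums_mult[OF this, of "inverse ((y - p) ^ m)"]
    have "(\<lambda>k. c (k + m) * (y - p) ^ k) sums (inverse ((y - p) ^ m) * f y)"
      using False by (simp add: power_add mult.left_commute[of "inverse _"])
    moreover from this have "F y = inverse ((y - p) ^ m) * f y" by (simp add: F_def sums_iff)
    ultimately show ?thesis using False by simp
  qed
  have "real_analytic_at F p"
    unfolding real_analytic_at_def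
    by (intro exI[of _ r] conjI exI[of _ "\<lambda>k. c (k + m)"] allI impI r) (use SF in blast)
  moreover have "F p = (deriv ^^ m) f p / fact m"
    using SF[of p] r higher_deriv_powser_expansion[OF r s, of m] by (simp add: sums_iff)
  moreover have "eventually (\<lambda>y. f y = (y - p) ^ m * F y) (nhds p)"
    unfolding eventually_nhds_metric using r SF by (auto simp: dist_real_def)
  ultimately show ?thesis by (rule that)
qed

lemma higher_deriv_of_power_factor:
  assumes "real_analytic_at F p" and "eventually (\<lambda>y. f y = (y - p) ^ m * F y) (nhds p)"
  shows "\<And>j. j < m \<Longrightarrow> (deriv ^^ j) f p = 0" and "(deriv ^^ m) f p = fact m * F p"
proof -
  obtain r1 d where r1: "r1 > 0"
    and s: "\<And>y. \<bar>y - p\<bar> < r1 \<Longrightarrow> (\<lambda>n. d n * (y - p) ^ n) sums F y"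
    using assms(1) unfolding real_analytic_at_def by blast
  obtain r2 where r2: "r2 > 0" and e2: "\<And>y. dist y p < r2 \<Longrightarrow> f y = (y - p) ^ m * F y"
    using assms(2) unfolding eventually_nhds_metric by blast
  define c where "c n = (if n < m then 0 else d (n - m))" for n
  have "(\<lambda>n. c n * (y - p) ^ n) sums f y" if y: "\<bar>y - p\<bar> < min r1 r2" for y
  proof -
    have "(\<lambda>k. (y - p) ^ m * (d k * (y - p) ^ k)) sums ((y - p) ^ m * F y)"
      by (rule sums_mult[OF s]) (use y in simp)
    then have "(\<lambda>k. c (k + m) * (y - p) ^ (k + m)) sums ((y - p) ^ m * F y)"
      by (simp add: c_def power_add mult_ac)
    then have "(\<lambda>n. c n * (y - p) ^ n) sums ((y - p) ^ m * F y + (\<Sum>i<m. c i * (y - p) ^ i))"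
      by (rule sums_iff_shift[THEN iffD1])
    then show ?thesis using e2[of y] y by (simp add: c_def dist_real_def)
  qed
  then have D: "(deriv ^^ j) f p = fact j * c j" for j
    by (intro higher_deriv_powser_expansion[of "min r1 r2"]) (use r1 r2 in auto)
  show "(deriv ^^ j) f p = 0" if "j < m" for j using D[of j] that by (simp add: c_def)
  show "(deriv ^^ m) f p = fact m * F p" using D[of m] s[of p] r1 by (simp add: c_def sums_iff)
qed

definition vanishes_to_order :: "(real \<Rightarrow> real) \<Rightarrow> real \<Rightarrow> nat \<Rightarrow> bool" where
  "vanishes_to_order f p m \<longleftrightarrow>
     (\<exists>F. real_analytic_at F p \<and> eventually (\<lambda>y. f y = (y - p) ^ m * F y) (nhds p))"

lemma vanishes_to_order_imp_higher_deriv: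
  "vanishes_to_order f p m \<Longrightarrow> j < m \<Longrightarrow> (deriv ^^ j) f p = 0"
  unfolding vanishes_to_order_def using higher_deriv_of_power_factor(1) by blast

lemma vanishes_to_order_iff_higher_deriv:
  "real_analytic_at f p \<Longrightarrow> vanishes_to_order f p m \<longleftrightarrow> (\<forall>j<m. (deriv ^^ j) f p = 0)"
  using vanishes_to_order_imp_higher_deriv real_analytic_at_factor_power
  unfolding vanishes_to_order_def by metis

lemma vanishes_to_order_0: "real_analytic_at f p \<Longrightarrow> vanishes_to_order f p 0"
  unfolding vanishes_to_order_def by (intro exI[of _ f]) simp

lemma vanishes_to_order_zero_fun: "vanishes_to_order (\<lambda>x. 0) p m"
  unfolding vanishes_to_order_def by (intro exI[of _ "\<lambda>x. 0"]) (simp add: real_analytic_at_const)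

lemma vanishes_to_order_imp_zero: "vanishes_to_order f p m \<Longrightarrow> m \<ge> 1 \<Longrightarrow> f p = 0"
  unfolding vanishes_to_order_def using eventually_nhds_x_imp_x by fastforce

lemma vanishes_to_order_add:
  assumes "vanishes_to_order f p m" "vanishes_to_order g p m"
  shows "vanishes_to_order (\<lambda>x. f x + g x) p m"
proof -
  obtain F G where F: "real_analytic_at F p" "eventually (\<lambda>y. f y = (y - p) ^ m * F y) (nhds p)"
    and G: "real_analytic_at G p" "eventually (\<lambda>y. g y = (y - p) ^ m * G y) (nhds p)"
    using assms unfolding vanishes_to_order_def by blast
  have "eventually (\<lambda>y. f y + g y = (y - p) ^ m * (F y + G y)) (nhds p)"
    using eventually_conj[OF F(2) G(2)] by eventually_elim (simp add: algebra_simps)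
  then show ?thesis unfolding vanishes_to_order_def using real_analytic_at_add[OF F(1) G(1)] by blast
qed

lemma vanishes_to_order_mult:
  assumes "vanishes_to_order f p m" "vanishes_to_order g p k"
  shows "vanishes_to_order (\<lambda>x. f x * g x) p (m + k)"
proof -
  obtain F G where F: "real_analytic_at F p" "eventually (\<lambda>y. f y = (y - p) ^ m * F y) (nhds p)"
    and G: "real_analytic_at G p" "eventually (\<lambda>y. g y = (y - p) ^ k * G y) (nhds p)"
    using assms unfolding vanishes_to_order_def by blast
  have "eventually (\<lambda>y. f y * g y = (y - p) ^ (m + k) * (F y * G y)) (nhds p)"
    using eventually_conj[OF F(2) G(2)] by eventually_elim (simp add: algebra_simps power_add)
  then show ?thesis
    unfolding vanishes_to_order_def using real_analytic_at_mult[OF F(1) G(1)] by blast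
qed

lemma vanishes_to_order_mono:
  assumes "vanishes_to_order f p m" "k \<le> m"
  shows "vanishes_to_order f p k"
proof -
  obtain F where F: "real_analytic_at F p" "eventually (\<lambda>y. f y = (y - p) ^ m * F y) (nhds p)"
    using assms unfolding vanishes_to_order_def by blast
  have "eventually (\<lambda>y. f y = (y - p) ^ k * ((y - p) ^ (m - k) * F y)) (nhds p)"
    using F(2) by eventually_elim (simp add: assms(2) mult.assoc[symmetric] power_add[symmetric])
  moreover have "real_analytic_at (\<lambda>y. (y - p) ^ (m - k) * F y) p"
    by (intro real_analytic_at_mult real_analytic_at_power real_analytic_at_diff
        real_analytic_at_ident real_analytic_at_const F(1))
  ultimately show ?thesis unfolding vanishes_to_order_def by blast
qed

lemma
  assumes "\<And>x. real_analytic_at f x" "f \<noteq> (\<lambda>x. 0)"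
  shows higher_deriv_vanishing_order_nonzero: "(deriv ^^ vanishing_order f p) f p \<noteq> 0"
    and higher_deriv_less_vanishing_order: "j < vanishing_order f p \<Longrightarrow> (deriv ^^ j) f p = 0"
  using LeastI_ex[OF real_analytic_higher_deriv_nonzero[OF assms]] not_less_Least
  unfolding vanishing_order_def by blast+

lemma vanishes_to_vanishing_order:
  "(\<And>x. real_analytic_at f x) \<Longrightarrow> f \<noteq> (\<lambda>x. 0) \<Longrightarrow> vanishes_to_order f p (vanishing_order f p)"
  using vanishes_to_order_iff_higher_deriv higher_deriv_less_vanishing_order by blast

lemma vanishes_to_order_le_vanishing_order:
  "(\<And>x. real_analytic_at f x) \<Longrightarrow> f \<noteq> (\<lambda>x. 0) \<Longrightarrow> vanishes_to_order f p m \<Longrightarrow>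
   m \<le> vanishing_order f p"
  using higher_deriv_vanishing_order_nonzero vanishes_to_order_imp_higher_deriv not_le by metis

lemma vanishing_order_eqI:
  assumes "real_analytic_at F p" "F p \<noteq> 0" "eventually (\<lambda>y. f y = (y - p) ^ m * F y) (nhds p)"
  shows "vanishing_order f p = m"
  unfolding vanishing_order_def
proof (rule Least_equality)
  show "(deriv ^^ m) f p \<noteq> 0" using higher_deriv_of_power_factor(2)[OF assms(1,3)] assms(2) by simp
  show "m \<le> k" if "(deriv ^^ k) f p \<noteq> 0" for k
    using higher_deriv_of_power_factor(1)[OF assms(1,3)] that not_le by blast
qed

lemma higher_deriv_periodic:
  fixes f :: "real \<Rightarrow> real"
  assumes "\<And>x. f (x + T) = f x"
  shows "(deriv ^^ n) f (x + T) = (deriv ^^ n) f x"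
proof (induction n arbitrary: x)
  case 0 then show ?case using assms by simp
next
  case (Suc n)
  have "(\<lambda>x. (deriv ^^ n) f (x + T)) = (deriv ^^ n) f" using Suc.IH by (simp add: fun_eq_iff)
  then have "((deriv ^^ n) f has_field_derivative D) (at (x + T)) \<longleftrightarrow>
             ((deriv ^^ n) f has_field_derivative D) (at x)" for D
    using DERIV_shift[of "(deriv ^^ n) f" D x T] by simp
  then show ?case unfolding deriv_def by simp
qed

lemma periodic_add_of_int_mult:
  fixes f :: "real \<Rightarrow> 'a"
  assumes "\<And>x. f (x + T) = f x"
  shows "f (x + of_int k * T) = f x"
proof (induction k rule: int_induct[where k = 0])
  case base then show ?case by simp
next
  case (step1 i)
  have "f (x + of_int (i + 1) * T) = f ((x + of_int i * T) + T)" by (simp add: algebra_simps)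
  then show ?case using assms step1 by simp
next
  case (step2 i)
  have "f (x + of_int i * T) = f ((x + of_int (i - 1) * T) + T)" by (simp add: algebra_simps)
  then show ?case using assms step2 by simp
qed

definition S1_rep :: "real \<Rightarrow> real" where
  "S1_rep x = x - 2 * pi * of_int \<lfloor>x / (2 * pi)\<rfloor>"

lemma S1_rep_in_S1: "S1_rep x \<in> S1"
proof -
  have a: "of_int \<lfloor>x / (2 * pi)\<rfloor> \<le> x / (2 * pi)" by (rule of_int_floor_le)
  have b: "x / (2 * pi) < of_int \<lfloor>x / (2 * pi)\<rfloor> + 1" by (rule real_of_int_floor_add_one_gt)
  have "of_int \<lfloor>x / (2 * pi)\<rfloor> * (2 * pi) \<le> x" using mult_right_mono[OF a, of "2 * pi"] by simp
  moreover have "x < (of_int \<lfloor>x / (2 * pi)\<rfloor> + 1) * (2 * pi)"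
    using mult_strict_right_mono[OF b, of "2 * pi"] by simp
  ultimately show ?thesis unfolding S1_def S1_rep_def by (auto simp: algebra_simps)
qed

lemma periodic_eq_at_S1_rep:
  fixes f :: "real \<Rightarrow> 'a"
  assumes "\<And>x. f (x + 2 * pi) = f x"
  shows "f (S1_rep x) = f x"
proof -
  have "f x = f (S1_rep x + of_int \<lfloor>x / (2 * pi)\<rfloor> * (2 * pi))" by (simp add: S1_rep_def)
  also have "\<dots> = f (S1_rep x)" by (rule periodic_add_of_int_mult[of f, OF assms])
  finally show ?thesis by simp
qed

lemma Can_periodic: "f \<in> Can \<Longrightarrow> f (x + 2 * pi) = f x"
  by (simp add: Can_def)

lemma Can_real_analytic: "f \<in> Can \<Longrightarrow> real_analytic_at f x"
  by (simp add: Can_def)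

lemma CanI: "(\<And>x. f (x + 2 * pi) = f x) \<Longrightarrow> (\<And>x. real_analytic_at f x) \<Longrightarrow> f \<in> Can"
  by (simp add: Can_def) blast

lemma Can_add: "f \<in> Can \<Longrightarrow> g \<in> Can \<Longrightarrow> (\<lambda>x. f x + g x) \<in> Can"
  by (intro CanI real_analytic_at_add) (auto simp: Can_periodic Can_real_analytic)

lemma Can_mult: "f \<in> Can \<Longrightarrow> g \<in> Can \<Longrightarrow> (\<lambda>x. f x * g x) \<in> Can"
  by (intro CanI real_analytic_at_mult) (auto simp: Can_periodic Can_real_analytic)

lemma Can_minus: "f \<in> Can \<Longrightarrow> (\<lambda>x. - f x) \<in> Can"
  by (intro CanI real_analytic_at_minus) (auto simp: Can_periodic Can_real_analytic)

lemma Can_const: "(\<lambda>x. k) \<in> Can"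
  by (intro CanI real_analytic_at_const) auto

lemma Can_sum: "finite A \<Longrightarrow> (\<And>i. i \<in> A \<Longrightarrow> F i \<in> Can) \<Longrightarrow> (\<lambda>x. \<Sum>i\<in>A. F i x) \<in> Can"
  by (induction A rule: finite_induct) (auto intro: Can_const Can_add)

lemma Can_higher_deriv_at_S1_rep: "f \<in> Can \<Longrightarrow> (deriv ^^ n) f (S1_rep x) = (deriv ^^ n) f x"
  by (intro periodic_eq_at_S1_rep higher_deriv_periodic Can_periodic)

lemma Can_vanishing_order_at_S1_rep: "f \<in> Can \<Longrightarrow> vanishing_order f (S1_rep x) = vanishing_order f x"
  by (simp add: vanishing_order_def Can_higher_deriv_at_S1_rep)

lemma Can_vanishes_to_order_at_S1_rep:
  "f \<in> Can \<Longrightarrow> vanishes_to_order f (S1_rep x) m \<longleftrightarrow> vanishes_to_order f x m"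
  by (simp add: vanishes_to_order_iff_higher_deriv Can_real_analytic Can_higher_deriv_at_S1_rep)

text \<open>
  Both \<open>A\<close> and \<open>B\<close> factor as \<open>(y - x)\<^sup>m\<close> times an analytic cofactor, and the quotient of the
  cofactors is the analytic extension of \<open>A / B\<close>.
\<close>

lemma real_analytic_at_divide_cancel:
  assumes A: "real_analytic_at A x" "\<And>j. j < m \<Longrightarrow> (deriv ^^ j) A x = 0"
    and B: "real_analytic_at B x" "\<And>j. j < m \<Longrightarrow> (deriv ^^ j) B x = 0" "(deriv ^^ m) B x \<noteq> 0"
    and h: "h x = (deriv ^^ m) A x / (deriv ^^ m) B x" "\<And>y. B y \<noteq> 0 \<Longrightarrow> h y = A y / B y"
  shows "real_analytic_at h x"
proof -
  obtain FA where FA: "real_analytic_at FA x" "FA x = (deriv ^^ m) A x / fact m"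
    "eventually (\<lambda>y. A y = (y - x) ^ m * FA y) (nhds x)"
    using real_analytic_at_factor_power[OF A] by blast
  obtain FB where FB: "real_analytic_at FB x" "FB x = (deriv ^^ m) B x / fact m"
    "eventually (\<lambda>y. B y = (y - x) ^ m * FB y) (nhds x)"
    using real_analytic_at_factor_power[OF B(1,2)] by blast
  have "FB x \<noteq> 0" using FB(2) B(3) by simp
  with real_analytic_at_imp_isCont[OF FB(1)]
  obtain e where "e > 0" "\<And>y. dist x y < e \<Longrightarrow> FB y \<noteq> 0" using continuous_at_avoid by blast
  then have "eventually (\<lambda>y. FB y \<noteq> 0) (nhds x)"
    unfolding eventually_nhds_metric by (auto simp: dist_commute)
  with FA(3) FB(3) have "eventually (\<lambda>y. h y = FA y / FB y) (nhds x)"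
  proof eventually_elim
    case (elim y)
    show ?case
    proof (cases "y = x")
      case True
      then show ?thesis using h(1) FA(2) FB(2) by simp
    next
      case False
      then have "B y \<noteq> 0" using elim by simp
      then have "h y = A y / B y" by (rule h(2))
      also have "\<dots> = FA y / FB y" using elim False by simp
      finally show ?thesis .
    qed
  qed
  then show ?thesis
    using real_analytic_at_cong_nhds real_analytic_at_divide[OF FA(1) FB(1) \<open>FB x \<noteq> 0\<close>] by blast
qed

lemma Can_divide:
  assumes A: "A \<in> Can" and B: "B \<in> Can" "B \<noteq> (\<lambda>x. 0)"
    and zeros: "\<And>x. B x = 0 \<Longrightarrow> vanishes_to_order A x (vanishing_order B x)"
  obtains h where "h \<in> Can" "\<And>x. B x \<noteq> 0 \<Longrightarrow> h x = A x / B x"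
proof
  define M where "M x = vanishing_order B x" for x
  define h where "h x = (deriv ^^ M x) A x / (deriv ^^ M x) B x" for x
  have M0: "M x = 0" if "B x \<noteq> 0" for x
    unfolding M_def vanishing_order_def by (rule Least_eq_0) (use that in simp)
  show quotient: "h x = A x / B x" if "B x \<noteq> 0" for x using M0[OF that] by (simp add: h_def)
  have "M (x + 2 * pi) = M x" for x
    unfolding M_def vanishing_order_def by (simp add: higher_deriv_periodic Can_periodic[OF B(1)])
  then have "h (x + 2 * pi) = h x" for x
    unfolding h_def by (simp add: higher_deriv_periodic Can_periodic[OF A] Can_periodic[OF B(1)])
  moreover have "real_analytic_at h x" for x
  proof (rule real_analytic_at_divide_cancel[of A x "M x" B])
    have "vanishes_to_order A x (M x)"
      using zeros vanishes_to_order_0[OF Can_real_analytic[OF A]] M0 unfolding M_def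
      by (cases "B x = 0") auto
    then show "(deriv ^^ j) A x = 0" if "j < M x" for j
      using that vanishes_to_order_imp_higher_deriv by blast
    show "(deriv ^^ j) B x = 0" if "j < M x" for j
      using higher_deriv_less_vanishing_order[OF Can_real_analytic[OF B(1)] B(2)] that
      by (simp add: M_def)
    show "(deriv ^^ M x) B x \<noteq> 0"
      using higher_deriv_vanishing_order_nonzero[OF Can_real_analytic[OF B(1)] B(2)]
      by (simp add: M_def)
  qed (use A B quotient in \<open>simp_all add: h_def Can_real_analytic\<close>)
  ultimately show "h \<in> Can" by (rule CanI)
qed

lemma Can_ring_simps [simp]:
  "carrier Can_ring = Can" "x \<otimes>\<^bsub>Can_ring\<^esub> y = (\<lambda>t. x t * y t)" "\<one>\<^bsub>Can_ring\<^esub> = (\<lambda>t. 1)"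
  "\<zero>\<^bsub>Can_ring\<^esub> = (\<lambda>t. 0)" "x \<oplus>\<^bsub>Can_ring\<^esub> y = (\<lambda>t. x t + y t)"
  by (simp_all add: Can_ring_def)

lemma cring_Can_ring: "cring Can_ring"
proof (rule cringI)
  show "abelian_group Can_ring"
  proof (rule abelian_groupI, goal_cases)
    case (6 x)
    then have "(\<lambda>t. - x t) \<in> carrier Can_ring" "(\<lambda>t. - x t) \<oplus>\<^bsub>Can_ring\<^esub> x = \<zero>\<^bsub>Can_ring\<^esub>"
      by (simp_all add: Can_minus)
    then show ?case by blast
  qed (simp_all add: Can_add Can_const fun_eq_iff algebra_simps)
  show "comm_monoid Can_ring"
    by (rule comm_monoidI) (simp_all add: Can_mult Can_const fun_eq_iff algebra_simps)
qed (simp add: fun_eq_iff algebra_simps)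

interpretation Can_ring: cring Can_ring by (rule cring_Can_ring)

lemma ideal_subset_Can: "ideal I Can_ring \<Longrightarrow> I \<subseteq> Can"
  using additive_subgroup.a_subset[OF ideal.axioms(1)] by fastforce

lemma ideal_zero_fun: "ideal I Can_ring \<Longrightarrow> (\<lambda>x. 0) \<in> I"
  using additive_subgroup.zero_closed[OF ideal.axioms(1)] by fastforce

lemma ideal_add: "ideal I Can_ring \<Longrightarrow> f \<in> I \<Longrightarrow> g \<in> I \<Longrightarrow> (\<lambda>x. f x + g x) \<in> I"
  using additive_subgroup.a_closed[OF ideal.axioms(1)] by fastforce

lemma ideal_mult_left: "ideal I Can_ring \<Longrightarrow> f \<in> Can \<Longrightarrow> g \<in> I \<Longrightarrow> (\<lambda>x. f x * g x) \<in> I"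
  using ideal.I_l_closed by fastforce

lemma ideal_sum_mult:
  assumes "ideal I Can_ring" "finite G" "G \<subseteq> I" "\<And>g. g \<in> G \<Longrightarrow> h g \<in> Can"
  shows "(\<lambda>x. \<Sum>g\<in>G. h g x * g x) \<in> I"
  using assms(2-4)
proof (induction G rule: finite_induct)
  case empty then show ?case using ideal_zero_fun[OF assms(1)] by simp
next
  case (insert g G)
  then show ?case using ideal_add[OF assms(1) ideal_mult_left[OF assms(1)]] by simp
qed

lemma ideal_max_ideal_at: "ideal (max_ideal_at p) Can_ring"
proof (rule idealI)
  show "subgroup (max_ideal_at p) (add_monoid Can_ring)"
  proof (rule Can_ring.add.subgroupI)
    show "max_ideal_at p \<subseteq> carrier Can_ring" "max_ideal_at p \<noteq> {}"
      using Can_const by (auto simp: max_ideal_at_def)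
    fix f assume "f \<in> max_ideal_at p"
    moreover have "\<ominus>\<^bsub>Can_ring\<^esub> f = (\<lambda>x. - f x)" if "f \<in> Can"
      by (rule Can_ring.minus_equality) (use that in \<open>auto simp: Can_minus\<close>)
    ultimately show "\<ominus>\<^bsub>Can_ring\<^esub> f \<in> max_ideal_at p" by (auto simp: max_ideal_at_def Can_minus)
  qed (auto simp: max_ideal_at_def Can_add)
qed (auto simp: max_ideal_at_def Can_mult Can_ring.ring_axioms)

definition vanishing_ideal :: "real set \<Rightarrow> (real \<Rightarrow> nat) \<Rightarrow> (real \<Rightarrow> real) set" where
  "vanishing_ideal Z a = {f \<in> Can. \<forall>p\<in>Z. vanishes_to_order f p (a p)}"

lemma vanishing_ideal_cong:
  "(\<And>p. p \<in> Z \<Longrightarrow> a p = b p) \<Longrightarrow> vanishing_ideal Z a = vanishing_ideal Z b"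
  by (simp add: vanishing_ideal_def)

definition common_zeros :: "(real \<Rightarrow> real) set \<Rightarrow> real set" where
  "common_zeros I = {p \<in> S1. \<forall>f\<in>I. f p = 0}"

definition ideal_order :: "(real \<Rightarrow> real) set \<Rightarrow> real \<Rightarrow> nat" where
  "ideal_order I p = (LEAST k. \<exists>f\<in>I. f \<noteq> (\<lambda>x. 0) \<and> vanishing_order f p = k)"

lemma ideal_order_attained:
  assumes "f \<in> I" "f \<noteq> (\<lambda>x. 0)"
  obtains g where "g \<in> I" "g \<noteq> (\<lambda>x. 0)" "vanishing_order g p = ideal_order I p"
  using LeastI_ex[of "\<lambda>k. \<exists>f\<in>I. f \<noteq> (\<lambda>x. 0) \<and> vanishing_order f p = k"] assms
  unfolding ideal_order_def by blast

lemma vanishes_to_ideal_order: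
  assumes "I \<subseteq> Can" "f \<in> I"
  shows "vanishes_to_order f p (ideal_order I p)"
proof (cases "f = (\<lambda>x. 0)")
  case True then show ?thesis by (simp add: vanishes_to_order_zero_fun)
next
  case False
  have "ideal_order I p \<le> vanishing_order f p"
    unfolding ideal_order_def by (rule Least_le) (use assms(2) False in blast)
  then show ?thesis
    using vanishes_to_order_mono vanishes_to_vanishing_order Can_real_analytic assms False
    by (metis subsetD)
qed

lemma subset_vanishing_ideal: "I \<subseteq> Can \<Longrightarrow> I \<subseteq> vanishing_ideal Z (ideal_order I)"
  unfolding vanishing_ideal_def using vanishes_to_ideal_order by blast

text \<open>
  Only the finitely many zeros of \<open>f0\<close> on the circle matter: each needs one more element of \<open>I\<close>,
  not vanishing there if it is not a common zero, and of minimal order there if it is.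
\<close>

lemma ideal_finite_test_set:
  assumes "I \<subseteq> Can" "f0 \<in> I" "f0 \<noteq> (\<lambda>x. 0)"
  obtains G where "finite G" "G \<subseteq> I" "f0 \<in> G"
    "\<And>p. p \<in> S1 \<Longrightarrow> \<forall>g\<in>G. g p = 0 \<Longrightarrow> p \<in> common_zeros I"
    "\<And>p. p \<in> common_zeros I \<Longrightarrow> \<exists>g\<in>G. g \<noteq> (\<lambda>x. 0) \<and> vanishing_order g p = ideal_order I p"
proof -
  define Q where "Q = {x \<in> S1. f0 x = 0}"
  have "finite Q"
    unfolding Q_def using finite_zeros_in_S1 assms Can_real_analytic by blast
  have "common_zeros I \<subseteq> Q" unfolding common_zeros_def Q_def using assms(2) by blast
  have "\<forall>q\<in>Q - common_zeros I. \<exists>g. g \<in> I \<and> g q \<noteq> 0" unfolding common_zeros_def Q_def by blast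
  then obtain nonzero where nonzero: "\<And>q. q \<in> Q - common_zeros I \<Longrightarrow> nonzero q \<in> I \<and> nonzero q q \<noteq> 0"
    by metis
  have "\<forall>p. \<exists>g. g \<in> I \<and> g \<noteq> (\<lambda>x. 0) \<and> vanishing_order g p = ideal_order I p"
    using ideal_order_attained[OF assms(2,3)] by metis
  then obtain minimal where minimal:
    "\<And>p. minimal p \<in> I \<and> minimal p \<noteq> (\<lambda>x. 0) \<and> vanishing_order (minimal p) p = ideal_order I p"
    by metis
  show ?thesis
  proof (rule that[of "insert f0 (nonzero ` (Q - common_zeros I) \<union> minimal ` common_zeros I)"])
    show "finite (insert f0 (nonzero ` (Q - common_zeros I) \<union> minimal ` common_zeros I))"
      using \<open>finite Q\<close> \<open>common_zeros I \<subseteq> Q\<close> finite_subset by auto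
    show "p \<in> common_zeros I"
      if "p \<in> S1" "\<forall>g\<in>insert f0 (nonzero ` (Q - common_zeros I) \<union> minimal ` common_zeros I). g p = 0" for p
      using that nonzero[of p] by (auto simp: Q_def)
    show "\<exists>g\<in>insert f0 (nonzero ` (Q - common_zeros I) \<union> minimal ` common_zeros I).
            g \<noteq> (\<lambda>x. 0) \<and> vanishing_order g p = ideal_order I p"
      if "p \<in> common_zeros I" for p
      using that minimal[of p] by blast
  qed (use assms(2) nonzero minimal in auto)
qed

lemma vanishing_order_sum_squares:
  assumes "finite G" "\<And>g. g \<in> G \<Longrightarrow> real_analytic_at g p \<and> vanishes_to_order g p k"
    and "g0 \<in> G" "(deriv ^^ k) g0 p \<noteq> 0"
  shows "vanishing_order (\<lambda>x. \<Sum>g\<in>G. g x * g x) p = 2 * k"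
proof -
  have "\<forall>g\<in>G. \<exists>F. real_analytic_at F p \<and> F p = (deriv ^^ k) g p / fact k \<and>
          eventually (\<lambda>y. g y = (y - p) ^ k * F y) (nhds p)"
  proof
    fix g assume "g \<in> G"
    with assms(2) obtain F where "real_analytic_at F p" "F p = (deriv ^^ k) g p / fact k"
      "eventually (\<lambda>y. g y = (y - p) ^ k * F y) (nhds p)"
      using real_analytic_at_factor_power vanishes_to_order_imp_higher_deriv by metis
    then show "\<exists>F. real_analytic_at F p \<and> F p = (deriv ^^ k) g p / fact k \<and>
          eventually (\<lambda>y. g y = (y - p) ^ k * F y) (nhds p)" by blast
  qed
  then obtain F where F: "\<And>g. g \<in> G \<Longrightarrow> real_analytic_at (F g) p \<and>
      F g p = (deriv ^^ k) g p / fact k \<and> eventually (\<lambda>y. g y = (y - p) ^ k * F g y) (nhds p)"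
    by metis
  define K where "K y = (\<Sum>g\<in>G. F g y * F g y)" for y
  have "real_analytic_at K p"
    unfolding K_def by (intro real_analytic_at_sum assms(1) real_analytic_at_mult) (auto dest: F)
  moreover have "K p > 0"
    unfolding K_def using F[OF assms(3)] assms(4)
    by (intro sum_pos2[OF assms(1,3)]) (auto simp: zero_less_mult_iff linorder_neq_iff)
  moreover have "eventually (\<lambda>y. \<forall>g\<in>G. g y = (y - p) ^ k * F g y) (nhds p)"
    using F by (intro eventually_ball_finite assms(1)) auto
  then have "eventually (\<lambda>y. (\<Sum>g\<in>G. g y * g y) = (y - p) ^ (2 * k) * K y) (nhds p)"
    by eventually_elim
       (simp add: K_def sum_distrib_left power_mult power2_eq_square algebra_simps cong: sum.cong)
  ultimately show ?thesis by (intro vanishing_order_eqI) auto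
qed

lemma ideal_mem_if_quotients_by_sum_squares:
  assumes I: "ideal I Can_ring" and G: "finite G" "G \<subseteq> I"
    and v: "v = (\<lambda>x. \<Sum>g\<in>G. g x * g x)" "v \<noteq> (\<lambda>x. 0)"
    and f: "f \<in> Can"
    and quotients: "\<And>g. g \<in> G \<Longrightarrow> \<exists>h\<in>Can. \<forall>x. v x \<noteq> 0 \<longrightarrow> h x = f x * g x / v x"
  shows "f \<in> I"
proof -
  obtain h where h: "\<And>g. g \<in> G \<Longrightarrow> h g \<in> Can \<and> (\<forall>x. v x \<noteq> 0 \<longrightarrow> h g x = f x * g x / v x)"
    using quotients by metis
  define d where "d x = f x - (\<Sum>g\<in>G. h g x * g x)" for x
  have "v \<in> Can" unfolding v(1) using G ideal_subset_Can[OF I] by (intro Can_sum Can_mult) auto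
  then obtain x0 where "v x0 \<noteq> 0" "isCont v x0"
    using v(2) Can_real_analytic real_analytic_at_imp_isCont by blast
  then obtain e where e: "e > 0" "\<And>y. dist x0 y < e \<Longrightarrow> v y \<noteq> 0"
    using continuous_at_avoid by blast
  have "d y = 0" if "v y \<noteq> 0" for y
  proof -
    have "(\<Sum>g\<in>G. h g y * g y) = (\<Sum>g\<in>G. f y * (g y * g y) / v y)"
      using h that by (intro sum.cong) auto
    also have "\<dots> = f y * v y / v y" by (simp add: v(1) sum_divide_distrib sum_distrib_left)
    also have "\<dots> = f y" using that by simp
    finally show ?thesis by (simp add: d_def)
  qed
  then have "eventually (\<lambda>y. d y = 0) (nhds x0)"
    unfolding eventually_nhds_metric using e by (auto simp: dist_commute)
  moreover have "real_analytic_at d x" for x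
    unfolding d_def using G f ideal_subset_Can[OF I] h
    by (intro real_analytic_at_diff real_analytic_at_sum real_analytic_at_mult Can_real_analytic)
       auto
  ultimately have "d = (\<lambda>x. 0)" using real_analytic_eq_zero_if_eventually_zero by blast
  then have "f = (\<lambda>x. \<Sum>g\<in>G. h g x * g x)" by (auto simp: d_def fun_eq_iff)
  also have "\<dots> \<in> I" using I G h by (intro ideal_sum_mult) auto
  finally show ?thesis .
qed

lemma ideal_sum_squares_test_function:
  assumes IC: "I \<subseteq> Can" and f0: "f0 \<in> I" "f0 \<noteq> (\<lambda>x. 0)"
  obtains G v where "finite G" "G \<subseteq> I" "v = (\<lambda>x. \<Sum>g\<in>G. g x * g x)" "v \<in> Can" "v \<noteq> (\<lambda>x. 0)"
    "\<And>x. v x = 0 \<Longrightarrow> S1_rep x \<in> common_zeros I"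
    "\<And>p. p \<in> common_zeros I \<Longrightarrow> vanishing_order v p = 2 * ideal_order I p"
proof -
  obtain G where G: "finite G" "G \<subseteq> I" "f0 \<in> G"
    and G_zeros: "\<And>p. p \<in> S1 \<Longrightarrow> \<forall>g\<in>G. g p = 0 \<Longrightarrow> p \<in> common_zeros I"
    and G_orders: "\<And>p. p \<in> common_zeros I \<Longrightarrow>
       \<exists>g\<in>G. g \<noteq> (\<lambda>x. 0) \<and> vanishing_order g p = ideal_order I p"
    using ideal_finite_test_set[OF IC f0] by blast
  have GC: "g \<in> Can" if "g \<in> G" for g using that G(2) IC by blast
  define v where "v = (\<lambda>x. \<Sum>g\<in>G. g x * g x)"
  have v_Can: "v \<in> Can" unfolding v_def using G(1) GC by (intro Can_sum Can_mult)
  obtain x0 where "f0 x0 \<noteq> 0" using f0(2) by auto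
  then have "v x0 > 0"
    unfolding v_def using G by (intro sum_pos2[of G f0]) (auto simp: zero_less_mult_iff)
  then have v_nonzero: "v \<noteq> (\<lambda>x. 0)" by (metis less_irrefl)
  have v_zero: "S1_rep x \<in> common_zeros I" if "v x = 0" for x
  proof (rule G_zeros[OF S1_rep_in_S1])
    have "v (S1_rep x) = 0" using that periodic_eq_at_S1_rep[of v, OF Can_periodic[OF v_Can]] by simp
    then show "\<forall>g\<in>G. g (S1_rep x) = 0"
      using sum_nonneg_eq_0_iff[OF G(1), of "\<lambda>g. g (S1_rep x) * g (S1_rep x)"]
      by (simp add: v_def)
  qed
  have v_order: "vanishing_order v p = 2 * ideal_order I p" if p: "p \<in> common_zeros I" for p
  proof -
    obtain g0 where g0: "g0 \<in> G" "g0 \<noteq> (\<lambda>x. 0)" "vanishing_order g0 p = ideal_order I p"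
      using G_orders[OF p] by blast
    have "(deriv ^^ ideal_order I p) g0 p \<noteq> 0"
      using higher_deriv_vanishing_order_nonzero[OF Can_real_analytic[OF GC[OF g0(1)]] g0(2)] g0(3)
      by metis
    then show ?thesis
      unfolding v_def using G(1,2) IC g0(1)
      by (intro vanishing_order_sum_squares[of G _ _ g0])
         (auto simp: Can_real_analytic GC vanishes_to_ideal_order)
  qed
  show ?thesis by (rule that[OF G(1,2) v_def v_Can v_nonzero v_zero v_order])
qed

lemma ideal_eq_vanishing_ideal:
  assumes I: "ideal I Can_ring" "I \<noteq> {\<lambda>x. 0}"
  shows "I = vanishing_ideal (common_zeros I) (ideal_order I)"
proof
  have IC: "I \<subseteq> Can" by (rule ideal_subset_Can[OF I(1)])
  then show "I \<subseteq> vanishing_ideal (common_zeros I) (ideal_order I)" by (rule subset_vanishing_ideal)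
  obtain f0 where f0: "f0 \<in> I" "f0 \<noteq> (\<lambda>x. 0)" using I ideal_zero_fun by blast
  obtain G v where G: "finite G" "G \<subseteq> I" and v_def: "v = (\<lambda>x. \<Sum>g\<in>G. g x * g x)"
    and v: "v \<in> Can" "v \<noteq> (\<lambda>x. 0)" "\<And>x. v x = 0 \<Longrightarrow> S1_rep x \<in> common_zeros I"
      "\<And>p. p \<in> common_zeros I \<Longrightarrow> vanishing_order v p = 2 * ideal_order I p"
    using ideal_sum_squares_test_function[OF IC f0] by blast
  show "vanishing_ideal (common_zeros I) (ideal_order I) \<subseteq> I"
  proof
    fix f assume "f \<in> vanishing_ideal (common_zeros I) (ideal_order I)"
    then have f: "f \<in> Can" "\<And>p. p \<in> common_zeros I \<Longrightarrow> vanishes_to_order f p (ideal_order I p)"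
      by (auto simp: vanishing_ideal_def)
    show "f \<in> I"
    proof (rule ideal_mem_if_quotients_by_sum_squares[OF I(1) G(1,2) v_def v(2) f(1)])
      fix g assume "g \<in> G"
      then have fg: "(\<lambda>x. f x * g x) \<in> Can" using f(1) G(2) IC by (intro Can_mult) auto
      have "vanishes_to_order (\<lambda>x. f x * g x) x (vanishing_order v x)" if "v x = 0" for x
      proof -
        let ?p = "S1_rep x"
        have "vanishes_to_order (\<lambda>x. f x * g x) ?p (ideal_order I ?p + ideal_order I ?p)"
          using f(2)[OF v(3)[OF that]] vanishes_to_ideal_order[OF IC] \<open>g \<in> G\<close> G(2)
          by (intro vanishes_to_order_mult) auto
        then show ?thesis
          using v(4)[OF v(3)[OF that]] Can_vanishing_order_at_S1_rep[OF v(1)]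
            Can_vanishes_to_order_at_S1_rep[OF fg] by (simp add: mult_2)
      qed
      then obtain h where "h \<in> Can" "\<And>x. v x \<noteq> 0 \<Longrightarrow> h x = f x * g x / v x"
        using Can_divide[OF fg v(1,2)] by blast
      then show "\<exists>h\<in>Can. \<forall>x. v x \<noteq> 0 \<longrightarrow> h x = f x * g x / v x" by blast
    qed
  qed
qed

lemma ideal_order_ge_1:
  assumes "I \<subseteq> Can" "f \<in> I" "f \<noteq> (\<lambda>x. 0)" "p \<in> common_zeros I"
  shows "ideal_order I p \<ge> 1"
proof (rule ccontr)
  obtain g where g: "g \<in> I" "g \<noteq> (\<lambda>x. 0)" "vanishing_order g p = ideal_order I p"
    using ideal_order_attained[OF assms(2,3)] by blast
  have "(deriv ^^ vanishing_order g p) g p \<noteq> 0"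
    using g(1,2) assms(1) by (intro higher_deriv_vanishing_order_nonzero Can_real_analytic) auto
  moreover assume "\<not> ideal_order I p \<ge> 1"
  then have "vanishing_order g p = 0" using g(3) by simp
  ultimately have "g p \<noteq> 0" by simp
  then show False using g(1) assms(4) by (simp add: common_zeros_def)
qed

interpretation Can_ideals: comm_monoid "ideals_set Can_ring"
  by (rule Can_ring.ideals_set_is_comm_monoid)

lemma ideals_set_Can_ring_simps:
  "carrier (ideals_set Can_ring) = {J. ideal J Can_ring}"
  "A \<otimes>\<^bsub>ideals_set Can_ring\<^esub> B = ideal_prod Can_ring A B"
  "\<one>\<^bsub>ideals_set Can_ring\<^esub> = Can"
  by (simp_all add: ideals_set_def)

lemma ideal_max_ideal_at_power: "ideal (max_ideal_at q [^]\<^bsub>ideals_set Can_ring\<^esub> (n::nat)) Can_ring"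
  using Can_ideals.nat_pow_closed[of "max_ideal_at q" n] ideal_max_ideal_at
  by (simp add: ideals_set_Can_ring_simps)

lemma power_mem_max_ideal_at_power:
  "w \<in> max_ideal_at q \<Longrightarrow> (\<lambda>x. w x ^ n) \<in> max_ideal_at q [^]\<^bsub>ideals_set Can_ring\<^esub> (n::nat)"
proof (induction n)
  case 0 then show ?case by (simp add: ideals_set_Can_ring_simps Can_const)
next
  case (Suc n)
  have "(\<lambda>x. w x ^ n) \<otimes>\<^bsub>Can_ring\<^esub> w \<in>
          ideal_prod Can_ring (max_ideal_at q [^]\<^bsub>ideals_set Can_ring\<^esub> n) (max_ideal_at q)"
    by (rule ideal_prod.prod) (use Suc in auto)
  then show ?case by (simp add: ideals_set_Can_ring_simps power_Suc2 mult.commute)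
qed

lemma max_ideal_at_power_vanishes:
  "f \<in> max_ideal_at q [^]\<^bsub>ideals_set Can_ring\<^esub> (n::nat) \<Longrightarrow> f \<in> Can \<and> vanishes_to_order f q n"
proof (induction n arbitrary: f)
  case 0 then show ?case
    by (simp add: ideals_set_Can_ring_simps vanishes_to_order_0 Can_real_analytic)
next
  case (Suc n)
  then have "f \<in> ideal_prod Can_ring (max_ideal_at q [^]\<^bsub>ideals_set Can_ring\<^esub> n) (max_ideal_at q)"
    by (simp add: ideals_set_Can_ring_simps)
  then show ?case
  proof (induction f rule: ideal_prod.induct)
    case (prod i k)
    have "k \<in> Can" "vanishes_to_order k q 1"
      using prod(2) Can_real_analytic by (auto simp: max_ideal_at_def vanishes_to_order_iff_higher_deriv)
    then show ?case
      using Suc.IH[OF prod(1)] vanishes_to_order_mult[of _ q n k 1] by (simp add: Can_mult)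
  qed (auto simp: Can_add vanishes_to_order_add)
qed

abbreviation max_ideal_powers :: "real set \<Rightarrow> (real \<Rightarrow> nat) \<Rightarrow> (real \<Rightarrow> real) set" where
  "max_ideal_powers Z a \<equiv>
     finprod (ideals_set Can_ring) (\<lambda>p. max_ideal_at p [^]\<^bsub>ideals_set Can_ring\<^esub> a p) Z"

lemma max_ideal_powers_insert:
  assumes "finite Z" "q \<notin> Z"
  shows "max_ideal_powers (insert q Z) a =
           ideal_prod Can_ring (max_ideal_at q [^]\<^bsub>ideals_set Can_ring\<^esub> a q) (max_ideal_powers Z a)"
  using Can_ideals.finprod_insert[OF assms] ideal_max_ideal_at_power
  by (simp add: ideals_set_Can_ring_simps Pi_def)

lemma ideal_max_ideal_powers: "ideal (max_ideal_powers Z a) Can_ring"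
  using Can_ideals.finprod_closed[of "\<lambda>p. max_ideal_at p [^]\<^bsub>ideals_set Can_ring\<^esub> a p" Z]
    ideal_max_ideal_at_power
  by (simp add: ideals_set_Can_ring_simps Pi_def)

lemma max_ideal_powers_subset_vanishing_ideal:
  "finite Z \<Longrightarrow> max_ideal_powers Z a \<subseteq> vanishing_ideal Z a"
proof (induction Z rule: finite_induct)
  case empty then show ?case by (simp add: ideals_set_Can_ring_simps vanishing_ideal_def)
next
  case (insert q Z)
  show ?case
  proof
    fix f assume "f \<in> max_ideal_powers (insert q Z) a"
    then have "f \<in> ideal_prod Can_ring (max_ideal_at q [^]\<^bsub>ideals_set Can_ring\<^esub> a q)
                   (max_ideal_powers Z a)"
      using max_ideal_powers_insert[OF insert(1,2)] by simp
    then show "f \<in> vanishing_ideal (insert q Z) a"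
    proof (induction f rule: ideal_prod.induct)
      case (prod i k)
      have i: "i \<in> Can" "vanishes_to_order i q (a q)"
        using max_ideal_at_power_vanishes[OF prod(1)] by auto
      have k: "k \<in> Can" "\<And>p. p \<in> Z \<Longrightarrow> vanishes_to_order k p (a p)"
        using prod(2) insert.IH by (auto simp: vanishing_ideal_def)
      have "vanishes_to_order (\<lambda>x. i x * k x) q (a q)"
        using vanishes_to_order_mult[OF i(2) vanishes_to_order_0[OF Can_real_analytic[OF k(1)]]]
        by simp
      moreover have "vanishes_to_order (\<lambda>x. i x * k x) p (a p)" if "p \<in> Z" for p
        using vanishes_to_order_mult[OF vanishes_to_order_0[OF Can_real_analytic[OF i(1)]] k(2)[OF that]]
        by simp
      ultimately show ?case using i k by (auto simp: vanishing_ideal_def Can_mult)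
    qed (auto simp: vanishing_ideal_def Can_add vanishes_to_order_add)
  qed
qed

lemma prod_powers_mem_max_ideal_powers:
  "finite Z \<Longrightarrow> (\<And>q. q \<in> Z \<Longrightarrow> w q \<in> max_ideal_at q) \<Longrightarrow>
   (\<lambda>x. \<Prod>q\<in>Z. w q x ^ a q) \<in> max_ideal_powers Z a"
proof (induction Z rule: finite_induct)
  case empty then show ?case by (simp add: ideals_set_Can_ring_simps Can_const)
next
  case (insert q Z)
  have "(\<lambda>x. w q x ^ a q) \<otimes>\<^bsub>Can_ring\<^esub> (\<lambda>x. \<Prod>q\<in>Z. w q x ^ a q) \<in>
          ideal_prod Can_ring (max_ideal_at q [^]\<^bsub>ideals_set Can_ring\<^esub> a q) (max_ideal_powers Z a)"
    by (rule ideal_prod.prod) (use insert power_mem_max_ideal_at_power in auto)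
  then show ?case using max_ideal_powers_insert[OF insert(1,2)] insert(1,2) by simp
qed

text \<open>
  \<open>sin \<theta> + c (1 - cos \<theta>) = 2 sin (\<theta>/2) (cos (\<theta>/2) + c sin (\<theta>/2))\<close> has a simple zero at
  \<open>\<theta> = 0\<close> and one further zero on the circle, which moves with \<open>c\<close>; so a suitable \<open>c\<close> avoids
  any finite set of points.
\<close>

definition simple_zero_at :: "real \<Rightarrow> real \<Rightarrow> real \<Rightarrow> real" where
  "simple_zero_at c q x = sin (x - q) + c * (1 - cos (x - q))"

lemma simple_zero_at_Can: "simple_zero_at c q \<in> Can"
proof (rule CanI)
  fix x
  have "x + 2 * pi - q = (x - q) + 2 * pi" by simp
  then show "simple_zero_at c q (x + 2 * pi) = simple_zero_at c q x"
    unfolding simple_zero_at_def by (simp only: sin_periodic cos_periodic)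
next
  show "real_analytic_at (simple_zero_at c q) x" for x
    unfolding simple_zero_at_def[abs_def]
    by (intro real_analytic_at_add real_analytic_at_mult real_analytic_at_diff
        real_analytic_at_const real_analytic_at_sin_diff real_analytic_at_cos_diff)
qed

lemma simple_zero_at_mem_max_ideal_at: "simple_zero_at c q \<in> max_ideal_at q"
  using simple_zero_at_Can by (simp add: max_ideal_at_def simple_zero_at_def)

lemma simple_zero_at_factor:
  obtains F where "real_analytic_at F q" "F q = 1"
    "eventually (\<lambda>y. simple_zero_at c q y = (y - q) ^ 1 * F y) (nhds q)"
proof -
  have "(simple_zero_at c q has_real_derivative 1) (at q)"
    unfolding simple_zero_at_def[abs_def] by (auto intro!: derivative_eq_intros)
  then have "(deriv ^^ 1) (simple_zero_at c q) q = 1" using DERIV_imp_deriv by simp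
  moreover have "(deriv ^^ j) (simple_zero_at c q) q = 0" if "j < 1" for j
    using that by (simp add: simple_zero_at_def)
  then obtain F where "real_analytic_at F q"
    "F q = (deriv ^^ 1) (simple_zero_at c q) q / fact 1"
    "eventually (\<lambda>y. simple_zero_at c q y = (y - q) ^ 1 * F y) (nhds q)"
    using real_analytic_at_factor_power[OF Can_real_analytic[OF simple_zero_at_Can]] by blast
  ultimately show ?thesis using that by simp
qed

lemma cos_diff_ne_1_S1: "t \<in> S1 \<Longrightarrow> q \<in> S1 \<Longrightarrow> t \<noteq> q \<Longrightarrow> cos (t - q) \<noteq> 1"
proof
  assume tq: "t \<in> S1" "q \<in> S1" "t \<noteq> q" and "cos (t - q) = 1"
  then obtain n :: int where n: "t - q = of_int n * 2 * pi" using cos_one_2pi_int by blast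
  have "- (2 * pi) < t - q" "t - q < 2 * pi" using tq unfolding S1_def by auto
  then have "(- 1) * (2 * pi) < of_int n * (2 * pi)" "of_int n * (2 * pi) < 1 * (2 * pi)"
    using n by (simp_all add: mult.assoc)
  then have "(- 1 :: real) < of_int n" "of_int n < (1 :: real)"
    using pi_gt_zero by (simp_all only: mult_less_cancel_right)
  then have "n = 0" by linarith
  then show False using n tq(3) by simp
qed

lemma exists_simple_zero_at_avoiding:
  assumes "finite T" "T \<subseteq> S1"
  obtains c where "\<And>t q. t \<in> T \<Longrightarrow> q \<in> T \<Longrightarrow> t \<noteq> q \<Longrightarrow> simple_zero_at c q t \<noteq> 0"
proof -
  define B where "B = (\<lambda>(t, q). - sin (t - q) / (1 - cos (t - q))) ` (T \<times> T)"
  have "finite B" unfolding B_def using assms(1) by simp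
  then obtain c where c: "c \<notin> B" using ex_new_if_finite[OF infinite_UNIV_char_0] by blast
  show ?thesis
  proof (rule that)
    fix t q assume tq: "t \<in> T" "q \<in> T" "t \<noteq> q"
    then have "1 - cos (t - q) \<noteq> 0" using cos_diff_ne_1_S1 assms(2) by auto
    moreover have "c \<noteq> - sin (t - q) / (1 - cos (t - q))" using c tq unfolding B_def by force
    ultimately show "simple_zero_at c q t \<noteq> 0"
      unfolding simple_zero_at_def by (auto simp: field_simps add_eq_0_iff2)
  qed
qed

lemma max_ideal_powers_witness:
  assumes "finite T" "Z \<subseteq> T" "T \<subseteq> S1"
  obtains w where "w \<in> max_ideal_powers Z a" "\<And>t. t \<in> T - Z \<Longrightarrow> w t \<noteq> 0"
    "\<And>p. p \<in> Z \<Longrightarrow> vanishing_order w p = a p"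
proof -
  have Z: "finite Z" using assms(1,2) finite_subset by blast
  obtain c where c: "\<And>t q. t \<in> T \<Longrightarrow> q \<in> T \<Longrightarrow> t \<noteq> q \<Longrightarrow> simple_zero_at c q t \<noteq> 0"
    using exists_simple_zero_at_avoiding[OF assms(1,3)] by blast
  define w where "w x = (\<Prod>q\<in>Z. simple_zero_at c q x ^ a q)" for x
  show ?thesis
  proof (rule that[of w])
    show "w \<in> max_ideal_powers Z a"
      unfolding w_def by (rule prod_powers_mem_max_ideal_powers[OF Z simple_zero_at_mem_max_ideal_at])
    show "w t \<noteq> 0" if "t \<in> T - Z" for t
      unfolding w_def using Z c that assms(2) by (auto simp: prod_zero_iff)
    fix p assume p: "p \<in> Z"
    obtain F where F: "real_analytic_at F p" "F p = 1"
      "eventually (\<lambda>y. simple_zero_at c p y = (y - p) ^ 1 * F y) (nhds p)"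
      using simple_zero_at_factor by blast
    define R where "R y = (\<Prod>q\<in>Z - {p}. simple_zero_at c q y ^ a q)" for y
    have "real_analytic_at R p" unfolding R_def using Z
      by (intro real_analytic_at_prod real_analytic_at_power Can_real_analytic[OF simple_zero_at_Can])
         auto
    with F(1) have analytic: "real_analytic_at (\<lambda>y. F y ^ a p * R y) p"
      by (intro real_analytic_at_mult real_analytic_at_power)
    have "R p \<noteq> 0" unfolding R_def using Z c p assms(2) by (auto simp: prod_zero_iff)
    then have nonzero: "F p ^ a p * R p \<noteq> 0" using F(2) by simp
    have "w y = simple_zero_at c p y ^ a p * R y" for y
      unfolding w_def R_def using prod.remove[OF Z p] by simp
    with F(3) have "eventually (\<lambda>y. w y = (y - p) ^ a p * (F y ^ a p * R y)) (nhds p)"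
      by (auto elim: eventually_mono simp: power_mult_distrib)
    with analytic nonzero show "vanishing_order w p = a p" by (rule vanishing_order_eqI)
  qed
qed

lemma max_ideal_powers_vanishes:
  "finite Z \<Longrightarrow> f \<in> max_ideal_powers Z a \<Longrightarrow> p \<in> Z \<Longrightarrow> f \<in> Can \<and> vanishes_to_order f p (a p)"
  using max_ideal_powers_subset_vanishing_ideal unfolding vanishing_ideal_def by blast

lemma common_zeros_max_ideal_powers:
  assumes Z: "finite Z" "Z \<subseteq> S1" and a: "\<And>p. p \<in> Z \<Longrightarrow> a p \<ge> 1"
  shows "common_zeros (max_ideal_powers Z a) = Z"
proof
  show "Z \<subseteq> common_zeros (max_ideal_powers Z a)"
  proof
    fix p assume p: "p \<in> Z"
    have "f p = 0" if "f \<in> max_ideal_powers Z a" for f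
      using max_ideal_powers_vanishes[OF Z(1) that p] vanishes_to_order_imp_zero a[OF p] by blast
    then show "p \<in> common_zeros (max_ideal_powers Z a)" using p Z(2) by (auto simp: common_zeros_def)
  qed
  show "common_zeros (max_ideal_powers Z a) \<subseteq> Z"
  proof
    fix p assume p: "p \<in> common_zeros (max_ideal_powers Z a)"
    show "p \<in> Z"
    proof (rule ccontr)
      assume "p \<notin> Z"
      have "insert p Z \<subseteq> S1" using p Z(2) by (simp add: common_zeros_def)
      obtain w where "w \<in> max_ideal_powers Z a" "\<And>t. t \<in> insert p Z - Z \<Longrightarrow> w t \<noteq> 0"
        "\<And>p. p \<in> Z \<Longrightarrow> vanishing_order w p = a p"
        by (rule max_ideal_powers_witness[of "insert p Z" Z a])
           (use Z(1) \<open>insert p Z \<subseteq> S1\<close> in auto)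
      moreover from this(2) have "w p \<noteq> 0" using \<open>p \<notin> Z\<close> by blast
      ultimately show False using p by (simp add: common_zeros_def)
    qed
  qed
qed

lemma max_ideal_powers_nonzero_witness:
  assumes Z: "finite Z" "Z \<subseteq> S1"
  obtains w where "w \<in> max_ideal_powers Z a" "w \<noteq> (\<lambda>x. 0)"
    "\<And>p. p \<in> Z \<Longrightarrow> vanishing_order w p = a p"
proof -
  have "infinite S1" unfolding S1_def by (simp add: infinite_Ico)
  then obtain t where "t \<in> S1 - Z" using Diff_infinite_finite[OF Z(1)] infinite_imp_nonempty by blast
  obtain w where "w \<in> max_ideal_powers Z a" "\<And>s. s \<in> insert t Z - Z \<Longrightarrow> w s \<noteq> 0"
    "\<And>p. p \<in> Z \<Longrightarrow> vanishing_order w p = a p"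
    by (rule max_ideal_powers_witness[of "insert t Z" Z a]) (use Z \<open>t \<in> S1 - Z\<close> in auto)
  moreover have "w t \<noteq> 0" using \<open>t \<in> S1 - Z\<close> calculation(2) by blast
  ultimately show ?thesis by (intro that) auto
qed

lemma ideal_order_max_ideal_powers:
  assumes Z: "finite Z" "Z \<subseteq> S1" and p: "p \<in> Z"
  shows "ideal_order (max_ideal_powers Z a) p = a p"
  unfolding ideal_order_def
proof (rule Least_equality)
  obtain w where "w \<in> max_ideal_powers Z a" "w \<noteq> (\<lambda>x. 0)" "vanishing_order w p = a p"
    using max_ideal_powers_nonzero_witness[OF Z] p by metis
  then show "\<exists>f\<in>max_ideal_powers Z a. f \<noteq> (\<lambda>x. 0) \<and> vanishing_order f p = a p" by blast
  fix k assume "\<exists>f\<in>max_ideal_powers Z a. f \<noteq> (\<lambda>x. 0) \<and> vanishing_order f p = k"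
  then obtain f where f: "f \<in> max_ideal_powers Z a" "f \<noteq> (\<lambda>x. 0)" "vanishing_order f p = k"
    by blast
  note f_vanishes = max_ideal_powers_vanishes[OF Z(1) f(1) p]
  show "a p \<le> k"
    using vanishes_to_order_le_vanishing_order[OF Can_real_analytic f(2)] f_vanishes f(3) by blast
qed

lemma max_ideal_powers_eq_vanishing_ideal:
  assumes "finite Z" "Z \<subseteq> S1" "\<And>p. p \<in> Z \<Longrightarrow> a p \<ge> 1"
  shows "max_ideal_powers Z a = vanishing_ideal Z a"
proof -
  obtain w where "w \<in> max_ideal_powers Z a" "w \<noteq> (\<lambda>x. 0)"
    using max_ideal_powers_nonzero_witness[OF assms(1,2)] by metis
  then have "max_ideal_powers Z a = vanishing_ideal (common_zeros (max_ideal_powers Z a))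
               (ideal_order (max_ideal_powers Z a))"
    using ideal_eq_vanishing_ideal[OF ideal_max_ideal_powers] by blast
  also have "\<dots> = vanishing_ideal Z (ideal_order (max_ideal_powers Z a))"
    by (simp only: common_zeros_max_ideal_powers[OF assms])
  also have "\<dots> = vanishing_ideal Z a"
    by (rule vanishing_ideal_cong) (rule ideal_order_max_ideal_powers[OF assms(1,2)])
  finally show ?thesis .
qed

theorem theorem1:
  fixes I :: "(real \<Rightarrow> real) set"
  assumes "ideal I Can_ring"
    and "I \<noteq> {\<lambda>x. 0}"
    and "I \<noteq> Can"
  defines "Z \<equiv> {p \<in> S1. \<forall>f \<in> I. f p = 0}"
    and "a \<equiv> (\<lambda>p. LEAST k. \<exists>f \<in> I. f \<noteq> (\<lambda>x. 0) \<and> vanishing_order f p = k)"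
  shows "finite Z \<and> Z \<noteq> {} \<and> (\<forall>p \<in> Z. a p \<ge> 1) \<and>
         I = finprod (ideals_set Can_ring)
               (\<lambda>p. max_ideal_at p [^]\<^bsub>ideals_set Can_ring\<^esub> a p) Z"
proof -
  have Z: "Z = common_zeros I" and a: "a = ideal_order I"
    by (simp_all add: Z_def a_def common_zeros_def ideal_order_def fun_eq_iff)
  have IC: "I \<subseteq> Can" by (rule ideal_subset_Can[OF assms(1)])
  obtain f0 where f0: "f0 \<in> I" "f0 \<noteq> (\<lambda>x. 0)" using assms(1,2) ideal_zero_fun by blast
  have I_eq: "I = vanishing_ideal Z a" unfolding Z a by (rule ideal_eq_vanishing_ideal[OF assms(1,2)])
  have "f0 \<in> Can" using f0(1) IC by blast
  then have "finite {x \<in> S1. f0 x = 0}" using finite_zeros_in_S1 Can_real_analytic f0(2) by blast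
  then have "finite Z" by (rule finite_subset[rotated]) (use f0(1) in \<open>auto simp: Z_def\<close>)
  moreover have "Z \<noteq> {}" using I_eq assms(3) by (auto simp: vanishing_ideal_def)
  moreover have "\<forall>p\<in>Z. a p \<ge> 1" unfolding Z a using ideal_order_ge_1[OF IC f0] by blast
  moreover have "Z \<subseteq> S1" by (simp add: Z_def)
  ultimately show ?thesis using I_eq max_ideal_powers_eq_vanishing_ideal by simp
qed

end
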